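(* Let $\mathcal{H}$ be a finite set of hypotheses, $\mathcal{R}$ a finite collection of decision regions $r\subseteq\mathcal{H}$, and $\mathcal{G}$ the set of subregions. Let $k_{\mathrm{as}}=m+1$, where $m$ is the largest cardinality of a set $R\subseteq\mathcal{R}$ such that (1) some hypothesis $\tilde h$ lies in every region of $R$, and (2) for every $r\in R$ there is a hypothesis $h$ with $h\notin r$ and $h\in r'$ for all $r'\in R\setminus\{r\}$. Then $\max_{r\in\mathcal{R}}|\{g\in\mathcal{G}: g\subseteq r\}|+1\ge k_{\mathrm{as}}$.
   Context: Subregions: hypotheses are grouped into the same subregion iff they belong to exactly the same decision regions; $\mathcal{G}$ is the set of these classes, and $g\subseteq r$ means every hypothesis of $g$ lies in $r$. *)

theory Defs
  imports Main
begin

definition subregions :: "'h set \<Rightarrow> 'h set set \<Rightarrow> 'h set set" where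
  "subregions H R = H // {(h, h'). h \<in> H \<and> h' \<in> H \<and> (\<forall>r\<in>R. h \<in> r \<longleftrightarrow> h' \<in> r)}"

definition as_admissible :: "'h set \<Rightarrow> 'h set set \<Rightarrow> 'h set set \<Rightarrow> bool" where
  "as_admissible H R S \<longleftrightarrow> S \<subseteq> R \<and>
     (\<exists>ht\<in>H. \<forall>r\<in>S. ht \<in> r) \<and>
     (\<forall>r\<in>S. \<exists>h\<in>H. h \<notin> r \<and> (\<forall>r'\<in>S - {r}. h \<in> r'))"

definition k_as :: "'h set \<Rightarrow> 'h set set \<Rightarrow> nat" where
  "k_as H R = Max {card S | S. as_admissible H R S} + 1"

end

theory Submission
  imports Defs
begin

text \<open>Fix a region \<open>r\<^sub>0\<close> of an admissible set \<open>S\<close>. Sending \<open>r\<^sub>0\<close> to the common hypothesis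
  \<open>h\<^sup>~\<close> and every other \<open>r \<in> S\<close> to its witness \<open>h \<notin> r\<close> yields hypotheses in \<open>r\<^sub>0\<close> that
  lie in pairwise different subregions: the image of \<open>r\<close> lies in every \<open>r' \<noteq> r\<close> of \<open>S\<close>,
  while the image of \<open>r' \<noteq> r\<^sub>0\<close> avoids \<open>r'\<close>. Hence \<open>r\<^sub>0\<close> contains at least \<open>|S|\<close> subregions.\<close>

definition region_equiv :: "'h set \<Rightarrow> 'h set set \<Rightarrow> ('h \<times> 'h) set" where
  "region_equiv H R = {(h, h'). h \<in> H \<and> h' \<in> H \<and> (\<forall>r\<in>R. h \<in> r \<longleftrightarrow> h' \<in> r)}"

lemma subregions_eq_quotient: "subregions H R = H // region_equiv H R"
  unfolding subregions_def region_equiv_def ..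

lemma equiv_region_equiv: "equiv H (region_equiv H R)"
  unfolding region_equiv_def by (rule equivI) (auto simp: refl_on_def sym_def trans_def)

lemma finite_subregions: "finite H \<Longrightarrow> finite (subregions H R)"
  unfolding subregions_eq_quotient by (rule finite_quotient) (auto simp: region_equiv_def)

lemma card_separated_le_card_subregions:
  assumes "finite H" and "r \<in> R"
    and into: "f ` A \<subseteq> H \<inter> r"
    and separated: "\<And>a b. a \<in> A \<Longrightarrow> b \<in> A \<Longrightarrow> a \<noteq> b \<Longrightarrow> \<exists>r'\<in>R. (f a \<in> r') \<noteq> (f b \<in> r')"
  shows "card A \<le> card {g \<in> subregions H R. g \<subseteq> r}"
proof -
  let ?E = "region_equiv H R"
  have "inj_on (\<lambda>a. ?E `` {f a}) A"
  proof (rule inj_onI, rule ccontr)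
    fix a b assume ab: "a \<in> A" "b \<in> A" "?E `` {f a} = ?E `` {f b}" "a \<noteq> b"
    moreover have "f a \<in> H" "f b \<in> H"
      using ab(1,2) into by auto
    ultimately have "(f a, f b) \<in> ?E"
      using eq_equiv_class_iff[OF equiv_region_equiv, of "f a" H "f b" R] by blast
    then show False
      using separated[OF ab(1,2,4)] unfolding region_equiv_def by auto
  qed
  moreover have "?E `` {f a} \<in> {g \<in> subregions H R. g \<subseteq> r}" if "a \<in> A" for a
  proof -
    have "f a \<in> H \<inter> r"
      using that into by blast
    then have "?E `` {f a} \<in> subregions H R"
      unfolding subregions_eq_quotient by (blast intro: quotientI)
    moreover have "?E `` {f a} \<subseteq> r"
      using \<open>f a \<in> H \<inter> r\<close> \<open>r \<in> R\<close> unfolding region_equiv_def by blast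
    ultimately show ?thesis
      by blast
  qed
  moreover have "finite {g \<in> subregions H R. g \<subseteq> r}"
    using finite_subregions[OF \<open>finite H\<close>] by simp
  ultimately show ?thesis
    by (intro card_inj_on_le image_subsetI)
qed

lemma as_admissible_separating_witnesses:
  assumes "as_admissible H R S" and "r\<^sub>0 \<in> S"
  obtains f where "f ` S \<subseteq> H \<inter> r\<^sub>0"
    and "\<And>r r'. r \<in> S \<Longrightarrow> r' \<in> S \<Longrightarrow> r \<noteq> r' \<Longrightarrow> f r \<in> r'"
    and "\<And>r'. r' \<in> S \<Longrightarrow> r' \<noteq> r\<^sub>0 \<Longrightarrow> f r' \<notin> r'"
proof -
  obtain ht where ht: "ht \<in> H" "\<forall>r\<in>S. ht \<in> r"
    using assms(1) unfolding as_admissible_def by blast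
  have "\<forall>r\<in>S. \<exists>h. h \<in> H \<and> h \<notin> r \<and> (\<forall>r'\<in>S - {r}. h \<in> r')"
    using assms(1) unfolding as_admissible_def by blast
  then obtain w where w: "\<And>r. r \<in> S \<Longrightarrow> w r \<in> H \<and> w r \<notin> r \<and> (\<forall>r'\<in>S - {r}. w r \<in> r')"
    by metis
  let ?f = "\<lambda>r. if r = r\<^sub>0 then ht else w r"
  show thesis
  proof (rule that[of ?f])
    show "?f ` S \<subseteq> H \<inter> r\<^sub>0"
    proof (rule image_subsetI)
      fix r assume "r \<in> S"
      then show "?f r \<in> H \<inter> r\<^sub>0"
        using ht w[OF \<open>r \<in> S\<close>] assms(2) by (cases "r = r\<^sub>0") auto
    qed
    show "?f r \<in> r'" if "r \<in> S" "r' \<in> S" "r \<noteq> r'" for r r'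
      using ht w[OF \<open>r \<in> S\<close>] that by (cases "r = r\<^sub>0") auto
    show "?f r' \<notin> r'" if "r' \<in> S" "r' \<noteq> r\<^sub>0" for r'
      using w[OF \<open>r' \<in> S\<close>] that by auto
  qed
qed

lemma card_as_admissible_le_card_subregions:
  assumes "finite H" and "as_admissible H R S" and "r\<^sub>0 \<in> S"
  shows "card S \<le> card {g \<in> subregions H R. g \<subseteq> r\<^sub>0}"
proof -
  obtain f where into: "f ` S \<subseteq> H \<inter> r\<^sub>0"
    and inside: "\<And>r r'. r \<in> S \<Longrightarrow> r' \<in> S \<Longrightarrow> r \<noteq> r' \<Longrightarrow> f r \<in> r'"
    and outside: "\<And>r'. r' \<in> S \<Longrightarrow> r' \<noteq> r\<^sub>0 \<Longrightarrow> f r' \<notin> r'"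
    using as_admissible_separating_witnesses[OF assms(2,3)] by blast
  have "S \<subseteq> R"
    using assms(2) unfolding as_admissible_def by blast
  have separated: "\<exists>r'\<in>R. (f a \<in> r') \<noteq> (f b \<in> r')"
    if "a \<in> S" "b \<in> S" "a \<noteq> b" for a b
  proof (cases "b = r\<^sub>0")
    case True
    then have "f a \<notin> a" "f b \<in> a"
      using that inside outside by auto
    then show ?thesis
      using \<open>a \<in> S\<close> \<open>S \<subseteq> R\<close> by blast
  next
    case False
    then have "f a \<in> b" "f b \<notin> b"
      using that inside outside by auto
    then show ?thesis
      using \<open>b \<in> S\<close> \<open>S \<subseteq> R\<close> by blast
  qed
  show ?thesis
    using card_separated_le_card_subregions[OF assms(1) _ into separated] assms(3) \<open>S \<subseteq> R\<close>
    by blast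
qed

theorem proposition4:
  fixes H :: "'h set" and R :: "'h set set"
  assumes "finite H" and "finite R" and "\<forall>r\<in>R. r \<subseteq> H"
    and "H \<noteq> {}" and "R \<noteq> {}"
  shows "Max ((\<lambda>r. card {g \<in> subregions H R. g \<subseteq> r}) ` R) + 1 \<ge> k_as H R"
proof -
  let ?A = "{card S | S. as_admissible H R S}"
  have "?A \<subseteq> card ` Pow R"
    unfolding as_admissible_def by blast
  then have "finite ?A"
    using assms(2) by (meson finite_Pow_iff finite_imageI finite_subset)
  moreover have "as_admissible H R {}"
    using assms(4) unfolding as_admissible_def by auto
  ultimately obtain S where S: "as_admissible H R S" "Max ?A = card S"
    using Max_in[of ?A] by fastforce
  have "card S \<le> Max ((\<lambda>r. card {g \<in> subregions H R. g \<subseteq> r}) ` R)"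
  proof (cases "S = {}")
    case False
    then obtain r\<^sub>0 where "r\<^sub>0 \<in> S" by blast
    moreover have "S \<subseteq> R"
      using S(1) unfolding as_admissible_def by blast
    ultimately have "card S \<le> card {g \<in> subregions H R. g \<subseteq> r\<^sub>0}" "r\<^sub>0 \<in> R"
      using card_as_admissible_le_card_subregions[OF assms(1) S(1)] by auto
    then show ?thesis
      using assms(2) by (meson Max_ge finite_imageI imageI le_trans)
  qed simp
  then show ?thesis
    unfolding k_as_def using S(2) by simp
qed

end
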